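(* Let $a<b$ be real numbers and let $f$ be a real function differentiable on $[a,b]$ (one-sided derivatives at the endpoints) such that $f(a)=f(b)$ and $a,b$ are $f$-separated. Then there exists $z\in\,]a,b[$ such that $f'(z)=0$ and the points $a,z,b$ are $f'$-separated, i.e. $f'$ is non-constant on $[a,z]$ and $f'$ is non-constant on $[z,b]$.
   Context: For a real function $f$ and real numbers $a<b$, the points $a,b$ are called $f$-separated if $f$ is defined on $[a,b]$ and non-constant there, i.e. there is $c\in[a,b]$ with $f(c)\neq f(a)$. A strictly increasing family of points $a_0<a_1<\dots$ is $f$-separated if every two consecutive points of it are $f$-separated. *)

theory Defs
  imports Complex_Main
begin

text \<open>Points a < b are f-separated: f is non-constant on [a,b]
  (f is total, so "defined on [a,b]" is automatic).\<close>
definition f_separated :: "(real \<Rightarrow> real) \<Rightarrow> real \<Rightarrow> real \<Rightarrow> bool" where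
  "f_separated f a b \<longleftrightarrow> a < b \<and> (\<exists>c\<in>{a..b}. f c \<noteq> f a)"

end

theory Submission
  imports Defs
begin

text \<open>Up to replacing \<open>f\<close> by \<open>-f\<close>, \<open>f\<close> exceeds \<open>f a = f b\<close> somewhere on \<open>[a,b]\<close>, so it attains
  its maximum at an interior point \<open>z\<close>, where \<open>f' z = 0\<close>. If \<open>f'\<close> were constant on \<open>[a,z]\<close>
  or on \<open>[z,b]\<close>, that constant would be \<open>f' z = 0\<close>, making \<open>f\<close> constant there and
  contradicting \<open>f z > f a = f b\<close>.\<close>

lemma f_separated_uminus [simp]:
  "f_separated (\<lambda>x. - f x) a b \<longleftrightarrow> f_separated f a b"
  by (simp add: f_separated_def)

lemma has_real_derivative_within_Icc_imp_continuous_on: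
  assumes "\<forall>x\<in>{a..b}. (f has_real_derivative f' x) (at x within {a..b})"
  shows "continuous_on {a..b} f"
  using assms DERIV_continuous continuous_on_eq_continuous_within by blast

lemma has_real_derivative_within_Icc_at:
  assumes "(f has_real_derivative D) (at x within {a..b})" "a < x" "x < b"
  shows "(f has_real_derivative D) (at x)"
  using assms at_within_Icc_at[of a x b] by simp

lemma has_real_derivative_within_Icc_subset:
  assumes "\<forall>x\<in>{a..b}. (f has_real_derivative f' x) (at x within {a..b})"
    and "a \<le> c" "d \<le> b"
  shows "\<forall>x\<in>{c..d}. (f has_real_derivative f' x) (at x within {c..d})"
proof
  fix x assume "x \<in> {c..d}"
  with assms have "(f has_real_derivative f' x) (at x within {a..b})" by auto
  moreover have "{c..d} \<subseteq> {a..b}" using assms(2,3) by auto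
  ultimately show "(f has_real_derivative f' x) (at x within {c..d})" by (rule DERIV_subset)
qed

lemma f_separated_derivative:
  fixes f f' :: "real \<Rightarrow> real"
  assumes "c < d"
    and deriv: "\<forall>x\<in>{c..d}. (f has_real_derivative f' x) (at x within {c..d})"
    and "f' c = 0 \<or> f' d = 0"
    and "f c \<noteq> f d"
  shows "f_separated f' c d"
proof (rule ccontr)
  assume "\<not> f_separated f' c d"
  then have const: "\<forall>x\<in>{c..d}. f' x = f' c"
    using \<open>c < d\<close> unfolding f_separated_def by blast
  then have "f' d = f' c"
    using \<open>c < d\<close> by (meson atLeastAtMost_iff less_imp_le order_refl)
  with \<open>f' c = 0 \<or> f' d = 0\<close> have "f' c = 0" by simp
  with const have zero: "\<forall>x\<in>{c..d}. f' x = 0" by metis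
  have "f d = f c"
  proof (rule DERIV_isconst_end[OF \<open>c < d\<close>])
    show "continuous_on {c..d} f"
      using deriv by (rule has_real_derivative_within_Icc_imp_continuous_on)
    show "DERIV f x :> 0" if "c < x" "x < d" for x
      using deriv zero that has_real_derivative_within_Icc_at[of f "f' x" x c d] by fastforce
  qed
  with \<open>f c \<noteq> f d\<close> show False by simp
qed

lemma interior_max_within_Icc:
  fixes f :: "real \<Rightarrow> real"
  assumes "continuous_on {a..b} f" "f a = f b" "c \<in> {a..b}" "f c > f a"
  obtains z where "a < z" "z < b" "f z > f a" "\<forall>y\<in>{a..b}. f y \<le> f z"
proof -
  from assms(3) have "a \<le> b" by simp
  then obtain z where z: "z \<in> {a..b}" "\<forall>y\<in>{a..b}. f y \<le> f z"
    using continuous_attains_sup[OF compact_Icc _ assms(1)] by auto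
  then have "f z > f a" using assms(3,4) by (meson less_le_trans)
  moreover from this have "a < z" "z < b" using assms(2) z(1) by (auto simp: less_le)
  ultimately show ?thesis using that z(2) by blast
qed

lemma derivative_zero_at_interior_max:
  fixes f :: "real \<Rightarrow> real"
  assumes "(f has_real_derivative D) (at z)" "a < z" "z < b"
    and "\<forall>y\<in>{a..b}. f y \<le> f z"
  shows "D = 0"
proof (rule DERIV_local_max[OF assms(1)])
  show "0 < min (z - a) (b - z)" using assms(2,3) by simp
  show "\<forall>y. \<bar>z - y\<bar> < min (z - a) (b - z) \<longrightarrow> f y \<le> f z"
    using assms(4) by (auto simp: abs_less_iff)
qed

lemma rolle_separated_above:
  fixes f f' :: "real \<Rightarrow> real"
  assumes deriv: "\<forall>x\<in>{a..b}. (f has_real_derivative f' x) (at x within {a..b})"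
    and "f a = f b" "c \<in> {a..b}" "f c > f a"
  shows "\<exists>z. a < z \<and> z < b \<and> f' z = 0 \<and> f_separated f' a z \<and> f_separated f' z b"
proof -
  obtain z where z: "a < z" "z < b" "f z > f a" "\<forall>y\<in>{a..b}. f y \<le> f z"
    using interior_max_within_Icc assms(2-4) has_real_derivative_within_Icc_imp_continuous_on[OF deriv]
    by blast
  have "(f has_real_derivative f' z) (at z)"
    using deriv z(1,2) by (intro has_real_derivative_within_Icc_at) auto
  then have "f' z = 0"
    using z(1,2,4) by (rule derivative_zero_at_interior_max)
  moreover have "f_separated f' a z"
    using has_real_derivative_within_Icc_subset[OF deriv, of a z] z \<open>f' z = 0\<close>
    by (intro f_separated_derivative) auto
  moreover have "f_separated f' z b"
    using has_real_derivative_within_Icc_subset[OF deriv, of z b] z \<open>f' z = 0\<close> \<open>f a = f b\<close>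
    by (intro f_separated_derivative) auto
  ultimately show ?thesis using z by blast
qed

theorem mainTheorem1:
  fixes f f' :: "real \<Rightarrow> real" and a b :: real
  assumes "a < b"
    and "\<forall>x\<in>{a..b}. (f has_real_derivative f' x) (at x within {a..b})"
    and "f a = f b"
    and "f_separated f a b"
  shows "\<exists>z. a < z \<and> z < b \<and> f' z = 0 \<and> f_separated f' a z \<and> f_separated f' z b"
proof -
  obtain c where c: "c \<in> {a..b}" "f c \<noteq> f a"
    using assms(4) unfolding f_separated_def by blast
  show ?thesis
  proof (cases "f c > f a")
    case True
    then show ?thesis using rolle_separated_above[OF assms(2,3) c(1)] by blast
  next
    case False
    have "\<forall>x\<in>{a..b}. ((\<lambda>x. - f x) has_real_derivative - f' x) (at x within {a..b})"
      using assms(2) by (auto intro: DERIV_minus)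
    moreover have "- f c > - f a" using False c(2) by simp
    ultimately show ?thesis
      using rolle_separated_above[of a b "\<lambda>x. - f x" "\<lambda>x. - f' x" c] assms(3) c(1) by auto
  qed
qed

end
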